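(* Let $\{M_n\}_{n\ge 0}$ be the Motzkin numbers, determined by $M_0=M_1=1$ and $(n+3)M_{n+1}=(2n+3)M_n+3nM_{n-1}$ for $n\ge 1$. Then $\{M_n\}_{n\ge 0}$ is log-convex.
   Context: A sequence $a_0,a_1,\ldots$ of nonnegative real numbers is log-convex if $a_{k-1}a_{k+1}\ge a_k^2$ for all $k\ge 1$. *)

theory Defs
  imports Complex_Main
begin

fun motzkin :: "nat \<Rightarrow> real" where
  "motzkin 0 = 1"
| "motzkin (Suc 0) = 1"
| "motzkin (Suc (Suc n)) =
     ((2 * real (Suc n) + 3) * motzkin (Suc n) + 3 * real (Suc n) * motzkin n) / (real (Suc n) + 3)"

definition log_convex :: "(nat \<Rightarrow> real) \<Rightarrow> bool" where
  "log_convex a \<longleftrightarrow> (\<forall>k. a k \<ge> 0) \<and> (\<forall>k\<ge>1. a (k - 1) * a (k + 1) \<ge> (a k)^2)"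

lemma motzkin_rec:
  "n \<ge> 1 \<Longrightarrow> (real n + 3) * motzkin (n + 1) = (2 * real n + 3) * motzkin n + 3 * real n * motzkin (n - 1)"
  by (cases n rule: nat.exhaust) (auto simp: field_simps)

end

theory Submission
  imports Defs
begin

text \<open>For a positive sequence, log-convexity says that the ratios \<open>r n = a (n+1) / a n\<close> increase.
  For the Motzkin numbers the recurrence gives \<open>r (n+1) = (2n+5 + 3(n+1) / r n) / (n+4)\<close>, a
  decreasing function of \<open>r n\<close>. Hence an upper bound on \<open>r n\<close> yields a lower bound on \<open>r (n+1)\<close> and
  vice versa, and the bounds \<open>(6n+6)/(2n+5) \<le> r n \<le> (6n+9)/(2n+6)\<close> propagate by induction from
  \<open>n = 2\<close>. Since the upper bound at \<open>n\<close> lies below the lower bound at \<open>n+1\<close>, the ratios increase.\<close>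

lemma log_convex_iff_incseq_ratio:
  fixes a :: "nat \<Rightarrow> real"
  assumes pos: "\<And>n. a n > 0"
  shows "log_convex a \<longleftrightarrow> incseq (\<lambda>n. a (Suc n) / a n)"
proof -
  have "a (Suc n) ^ 2 \<le> a n * a (Suc (Suc n)) \<longleftrightarrow> a (Suc n) / a n \<le> a (Suc (Suc n)) / a (Suc n)"
    for n
    using pos[of n] pos[of "Suc n"] by (simp add: divide_simps power2_eq_square mult.commute)
  moreover have "(\<forall>k\<ge>1. P k) \<longleftrightarrow> (\<forall>n. P (Suc n))" for P :: "nat \<Rightarrow> bool"
    by (metis One_nat_def Suc_le_D Suc_le_mono zero_less_Suc less_eq_Suc_le)
  ultimately show ?thesis
    using pos by (simp add: log_convex_def incseq_Suc_iff less_imp_le)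
qed

lemma motzkin_Suc_Suc:
  "(real n + 4) * motzkin (Suc (Suc n)) = (2 * real n + 5) * motzkin (Suc n) + 3 * (real n + 1) * motzkin n"
  by (simp add: field_simps)

declare motzkin.simps(3)[simp del]

lemma motzkin_pos: "motzkin n > 0"
proof (induction n rule: motzkin.induct)
  case (3 n)
  have "(real n + 4) * motzkin (Suc (Suc n)) > 0"
    using "3.IH" by (simp add: motzkin_Suc_Suc add_pos_pos)
  then show ?case by (simp add: zero_less_mult_iff)
qed simp_all

lemma motzkin_2: "motzkin 2 = 2"
  and motzkin_3: "motzkin 3 = 4"
  by (simp_all add: numeral_3_eq_3 numeral_2_eq_2 motzkin.simps)

definition motzkin_ratio :: "nat \<Rightarrow> real" where
  "motzkin_ratio n = motzkin (Suc n) / motzkin n"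

lemma motzkin_ratio_pos: "motzkin_ratio n > 0"
  by (simp add: motzkin_ratio_def motzkin_pos)

lemma motzkin_ratio_Suc:
  "motzkin_ratio (Suc n) = (2 * real n + 5 + 3 * (real n + 1) / motzkin_ratio n) / (real n + 4)"
proof -
  have pos: "motzkin n > 0" "motzkin (Suc n) > 0"
    by (simp_all add: motzkin_pos)
  have "motzkin_ratio (Suc n) = ((2 * real n + 5) * motzkin (Suc n) + 3 * (real n + 1) * motzkin n)
      / ((real n + 4) * motzkin (Suc n))"
    unfolding motzkin_ratio_def motzkin_Suc_Suc [symmetric] using pos by simp
  also have "\<dots> = (2 * real n + 5 + 3 * (real n + 1) / motzkin_ratio n) / (real n + 4)"
    using pos by (simp add: motzkin_ratio_def field_simps)
  finally show ?thesis .
qed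

lemma add_divide_antimono:
  fixes b c d s t :: real
  assumes "c \<ge> 0" "d > 0" "0 < s" "s \<le> t"
  shows "(b + c / t) / d \<le> (b + c / s) / d"
  using assms by (simp add: divide_right_mono divide_left_mono mult_pos_pos)

lemma motzkin_ratio_bounds:
  assumes "n \<ge> 2"
  shows "(6 * real n + 6) / (2 * real n + 5) \<le> motzkin_ratio n
       \<and> motzkin_ratio n \<le> (6 * real n + 9) / (2 * real n + 6)"
  using assms
proof (induction n rule: dec_induct)
  case base
  show ?case by (simp add: motzkin_ratio_def motzkin_2 motzkin_3 numeral_2_eq_2 [symmetric])
next
  case (step n)
  let ?x = "real n" and ?r = "motzkin_ratio n"
  let ?f = "\<lambda>r. (2 * ?x + 5 + 3 * (?x + 1) / r) / (?x + 4)"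
  have low: "(6 * ?x + 6) / (2 * ?x + 5) \<le> ?r" and up: "?r \<le> (6 * ?x + 9) / (2 * ?x + 6)"
    using step.IH by auto
  have f_up: "3 * (?x + 1) / ((6 * ?x + 9) / (2 * ?x + 6)) = 2 * (?x + 1) * (?x + 3) / (2 * ?x + 3)"
    and f_low: "3 * (?x + 1) / ((6 * ?x + 6) / (2 * ?x + 5)) = (2 * ?x + 5) / 2"
    by (simp_all add: field_simps)
  have "(6 * (?x + 1) + 6) / (2 * (?x + 1) + 5) \<le> ?f ((6 * ?x + 9) / (2 * ?x + 6))"
    using f_up by (simp add: divide_simps) (simp add: algebra_simps)
  also have "\<dots> \<le> motzkin_ratio (Suc n)"
    unfolding motzkin_ratio_Suc using up motzkin_ratio_pos by (intro add_divide_antimono) auto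
  finally have low_Suc: "(6 * (?x + 1) + 6) / (2 * (?x + 1) + 5) \<le> motzkin_ratio (Suc n)" .
  have "motzkin_ratio (Suc n) \<le> ?f ((6 * ?x + 6) / (2 * ?x + 5))"
    unfolding motzkin_ratio_Suc using low by (intro add_divide_antimono) auto
  also have "\<dots> = (6 * (?x + 1) + 9) / (2 * (?x + 1) + 6)"
    using f_low by (simp add: divide_simps) (simp add: algebra_simps)
  finally show ?case
    using low_Suc by simp
qed

lemma incseq_motzkin_ratio: "incseq motzkin_ratio"
proof (rule incseq_SucI)
  fix n :: nat
  consider "n = 0" | "n = 1" | "n \<ge> 2" by linarith
  then show "motzkin_ratio n \<le> motzkin_ratio (Suc n)"
  proof cases
    case 3
    let ?x = "real n"
    have "motzkin_ratio n \<le> (6 * ?x + 9) / (2 * ?x + 6)"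
      using motzkin_ratio_bounds[OF 3] by simp
    also have "\<dots> \<le> (6 * (?x + 1) + 6) / (2 * (?x + 1) + 5)"
      by (simp add: field_simps)
    also have "\<dots> \<le> motzkin_ratio (Suc n)"
      using motzkin_ratio_bounds[of "Suc n"] 3 by simp
    finally show ?thesis .
  qed (simp_all add: motzkin_ratio_def motzkin_2 motzkin_3 numeral_2_eq_2 [symmetric] numeral_3_eq_3 [symmetric])
qed

theorem corollary3p3:
  shows "log_convex motzkin"
  using incseq_motzkin_ratio
  by (simp add: log_convex_iff_incseq_ratio motzkin_pos motzkin_ratio_def [abs_def])

end
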